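(* Let $m\in(0,1)$, $v\in(0,D(m))$, $M_0\in(m,1)$ and $V_0\in(0,D(M_0))$. If $F_{m,v}\preceq_{\text{ssd}}F_{M_0,V_0}$, then there exists $M>M_0$ with $V_0\le D(M)$ such that $F_{m,v}$ and $F_{M,V_0}$ are not comparable for $\preceq_{\text{ssd}}$.
   Context: $D(M)=M-M^2$. For $0<V<D(M)$, $F_{M,V}$ is the distribution function of the Beta$(\alpha,\beta)$ law with $\alpha=\frac{M(M-M^2-V)}{V}$, $\beta=\frac{(1-M)(M-M^2-V)}{V}$ (mean $M$, variance $V$); for $V=D(M)$, $F_{M,D(M)}(x)=1-M$ for $0\le x<1$ and $F_{M,D(M)}(1)=1$. $F_1\preceq_{\text{ssd}}F_2$ means $\int_0^xF_2(t)dt\le\int_0^xF_1(t)dt$ for all $x\in[0,1]$. *)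

theory Defs
  imports "HOL-Analysis.Analysis"
begin

definition D :: "real \<Rightarrow> real" where
  "D M = M - M\<^sup>2"

text \<open>Unnormalised Beta density and the Beta(a,b) distribution function on [0,1]
  (Henstock-Kurzweil integrals; for x > 1 the value is 1, for x < 0 it is 0).\<close>
definition beta_dens :: "real \<Rightarrow> real \<Rightarrow> real \<Rightarrow> real" where
  "beta_dens a b t = t powr (a - 1) * (1 - t) powr (b - 1)"

definition beta_cdf :: "real \<Rightarrow> real \<Rightarrow> real \<Rightarrow> real" where
  "beta_cdf a b x = integral {0..min x 1} (beta_dens a b) / integral {0..1} (beta_dens a b)"

definition F :: "real \<Rightarrow> real \<Rightarrow> real \<Rightarrow> real" where
  "F M V x =
     (if V = D M then (if x < 0 then 0 else if x < 1 then 1 - M else 1)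
      else beta_cdf (M * (M - M\<^sup>2 - V) / V) ((1 - M) * (M - M\<^sup>2 - V) / V) x)"

definition ssd :: "(real \<Rightarrow> real) \<Rightarrow> (real \<Rightarrow> real) \<Rightarrow> bool" where
  "ssd F1 F2 \<longleftrightarrow> (\<forall>x\<in>{0..1}. integral {0..x} F2 \<le> integral {0..x} F1)"

end

theory Submission
  imports Defs
begin

text \<open>Take for \<open>M\<close> the larger root of \<open>D M = V\<^sub>0\<close>. Then \<open>F M V\<^sub>0\<close> is the two-point law on
  \<open>{0, 1}\<close> with mean \<open>M > M\<^sub>0 > m\<close>, whose integrated distribution function is \<open>(1 - M) x\<close>.
  The integrated Beta distribution function is \<open>o(x)\<close> at \<open>0\<close>, so it lies below \<open>(1 - M) x\<close>
  near \<open>0\<close>; at \<open>x = 1\<close> both integrals equal one minus the mean, and \<open>1 - m > 1 - M\<close>.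
  Hence neither dominance holds.\<close>

lemma Beta_pos_real: "a > 0 \<Longrightarrow> b > 0 \<Longrightarrow> Beta a b > (0::real)"
  by (simp add: Beta_altdef rGamma_inverse_Gamma)

lemma has_integral_beta_dens: "a > 0 \<Longrightarrow> b > 0 \<Longrightarrow> (beta_dens a b has_integral Beta a b) {0..1}"
  unfolding beta_dens_def by (rule has_integral_Beta_real)

lemma beta_cdf_eq_integral:
  assumes "a > 0" "b > 0" "x \<le> 1"
  shows "beta_cdf a b x = integral {0..x} (beta_dens a b) / Beta a b"
  using assms has_integral_beta_dens[OF assms(1,2)] unfolding beta_cdf_def
  by (simp add: integral_unique)

lemma continuous_on_beta_cdf:
  assumes "a > 0" "b > 0"
  shows "continuous_on {0..1} (beta_cdf a b)"
proof -
  have "continuous_on {0..1} (\<lambda>x. integral {0..x} (beta_dens a b) / Beta a b)"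
    using has_integral_beta_dens[OF assms] Beta_pos_real[OF assms]
    by (intro continuous_intros indefinite_integral_continuous_1) auto
  then show ?thesis
    by (rule continuous_on_cong[THEN iffD1, rotated 2]) (auto simp: beta_cdf_eq_integral assms)
qed

text \<open>Integration by parts against \<open>t - b\<close>.\<close>
lemma has_integral_indefinite_integral:
  fixes f :: "real \<Rightarrow> real"
  assumes "a \<le> b" "f integrable_on {a..b}" "continuous_on {a<..<b} f"
    and "((\<lambda>t. (b - t) * f t) has_integral I) {a..b}"
  shows "((\<lambda>x. integral {a..x} f) has_integral I) {a..b}"
proof -
  define H where "H x = integral {a..x} f" for x
  define K where "K x = (x - b) * H x" for x
  have "continuous_on {a..b} K"
    unfolding K_def H_def by (intro continuous_intros indefinite_integral_continuous_1 assms)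
  moreover have "(K has_vector_derivative (H x + (x - b) * f x)) (at x)" if x: "x \<in> {a<..<b}" for x
  proof -
    have "isCont f x"
      using x assms(3) by (simp add: continuous_on_eq_continuous_at)
    then have "(H has_vector_derivative f x) (at x within {a..b} - {})"
      unfolding H_def using x
      by (intro integral_has_vector_derivative_continuous_at assms(2))
         (auto intro: continuous_at_imp_continuous_within)
    moreover have "at x within {a..b} - {} = at x"
      using x by (intro at_within_interior) auto
    ultimately have "(H has_real_derivative f x) (at x)"
      by (simp add: has_real_derivative_iff_has_vector_derivative)
    then have "(K has_real_derivative (1 * H x + (x - b) * f x)) (at x)"
      unfolding K_def by (auto intro!: derivative_eq_intros)
    then show ?thesis by (simp add: has_real_derivative_iff_has_vector_derivative)
  qed
  ultimately have "((\<lambda>x. H x + (x - b) * f x) has_integral (K b - K a)) {a..b}"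
    using assms(1) by (intro fundamental_theorem_of_calculus_interior) auto
  then have "((\<lambda>x. H x + (x - b) * f x) has_integral 0) {a..b}"
    by (simp add: K_def H_def)
  from has_integral_add[OF this assms(4)] show ?thesis
    by (simp add: H_def algebra_simps)
qed

lemma has_integral_one_minus_times_beta_dens:
  assumes "a > 0" "b > 0"
  shows "((\<lambda>t. (1 - t) * beta_dens a b t) has_integral Beta a (b + 1)) {0..1}"
proof -
  have "((\<lambda>t. t powr (a - 1) * (1 - t) powr (b + 1 - 1)) has_integral Beta a (b + 1)) {0..1}"
    by (rule has_integral_Beta_real) (use assms in auto)
  moreover have "t powr (a - 1) * (1 - t) powr (b + 1 - 1) = (1 - t) * beta_dens a b t"
    if "t \<in> {0..1}" for t
  proof (cases "t = 1")
    case False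
    then have "(1 - t) powr (b + 1 - 1) = (1 - t) * (1 - t) powr (b - 1)"
      using that powr_add[of "1 - t" "b - 1" 1] by simp
    then show ?thesis unfolding beta_dens_def by simp
  qed (use assms in \<open>simp add: beta_dens_def\<close>)
  ultimately show ?thesis
    by (metis (no_types, lifting) has_integral_cong)
qed

lemma integral_beta_cdf:
  assumes "a > 0" "b > 0"
  shows "integral {0..1} (beta_cdf a b) = b / (a + b)"
proof -
  have Beta: "Beta a b > 0" using Beta_pos_real[OF assms] .
  have "continuous_on {0<..<1} (beta_dens a b)"
    unfolding beta_dens_def by (auto intro!: continuous_intros)
  then have "((\<lambda>x. integral {0..x} (beta_dens a b)) has_integral Beta a (b + 1)) {0..1}"
    using has_integral_beta_dens[OF assms]
    by (intro has_integral_indefinite_integral has_integral_one_minus_times_beta_dens assms) auto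
  then have "((\<lambda>x. integral {0..x} (beta_dens a b) / Beta a b) has_integral
      Beta a (b + 1) / Beta a b) {0..1}"
    by (rule has_integral_divide)
  then have "(beta_cdf a b has_integral Beta a (b + 1) / Beta a b) {0..1}"
    by (rule has_integral_cong[THEN iffD1, rotated]) (simp add: beta_cdf_eq_integral assms)
  moreover have "(a + b) * Beta a (b + 1) = b * Beta a b"
    by (rule Beta_plus1_right) (use assms in \<open>auto elim!: nonpos_Ints_cases\<close>)
  ultimately show ?thesis
    using Beta assms by (simp add: integral_unique field_simps)
qed

lemma integral_below_linear_near_zero:
  fixes G :: "real \<Rightarrow> real"
  assumes "continuous_on {0..1} G" "G 0 = 0" "c > 0"
  shows "\<exists>x. 0 < x \<and> x < 1 \<and> integral {0..x} G < c * x"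
proof -
  obtain d where d: "d > 0" "\<And>t. t \<in> {0..1} \<Longrightarrow> dist t 0 < d \<Longrightarrow> dist (G t) (G 0) < c / 2"
    using assms(1) half_gt_zero[OF assms(3)] unfolding continuous_on_iff
    by (metis atLeastAtMost_iff order_refl zero_le_one)
  define x where "x = min (d / 2) (1 / 2)"
  have x: "0 < x" "x < 1" "x < d" using d unfolding x_def by auto
  have "integral {0..x} G \<le> integral {0..x} (\<lambda>_. c / 2)"
  proof (rule integral_le)
    show "G integrable_on {0..x}"
      using x by (intro integrable_continuous_interval continuous_on_subset[OF assms(1)]) auto
    fix t assume "t \<in> {0..x}"
    then show "G t \<le> c / 2"
      using x d(2)[of t] assms(2) by (auto simp: dist_real_def)
  qed auto
  also have "\<dots> < c * x" using assms(3) x by simp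
  finally show ?thesis using x by blast
qed

lemma F_eq_beta_cdf:
  assumes "V < D M"
  shows "F M V = beta_cdf (M * (M - M\<^sup>2 - V) / V) ((1 - M) * (M - M\<^sup>2 - V) / V)"
  using assms by (auto simp: F_def fun_eq_iff)

lemma beta_parameters_pos:
  assumes "0 < M" "M < 1" "0 < V" "V < D M"
  shows "M * (M - M\<^sup>2 - V) / V > 0" "(1 - M) * (M - M\<^sup>2 - V) / V > 0"
  using assms by (auto simp: D_def)

lemma integral_F_unit_interval:
  assumes "0 < M" "M < 1" "0 < V" "V \<le> D M"
  shows "integral {0..1} (F M V) = 1 - M"
proof (cases "V = D M")
  case True
  have "integral {0..1} (F M V) = integral {0..1::real} (\<lambda>_. 1 - M)"
    by (rule integral_spike[where S = "{1}"]) (auto simp: F_def True)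
  then show ?thesis by simp
next
  case False
  define P where "P = M - M\<^sup>2 - V"
  have "P > 0" using assms False by (simp add: P_def D_def)
  then have "((1 - M) * P / V) / (M * P / V + (1 - M) * P / V) = 1 - M"
    using assms(3) by (simp add: field_simps)
  then show ?thesis
    using assms False integral_beta_cdf[OF beta_parameters_pos[OF assms(1-3)]]
    by (simp add: F_eq_beta_cdf P_def)
qed

lemma integral_F_max_variance:
  assumes "V = D M" "0 \<le> x" "x \<le> 1"
  shows "integral {0..x} (F M V) = (1 - M) * x"
proof -
  have "integral {0..x} (F M V) = integral {0..x} (\<lambda>_. 1 - M)"
    by (rule integral_spike[where S = "{1}"]) (use assms in \<open>auto simp: F_def\<close>)
  then show ?thesis using assms by simp
qed

lemma exists_greater_root_of_D:
  assumes "0 < V" "V < D M0"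
  shows "\<exists>M > M0. M < 1 \<and> D M = V"
proof -
  have "D M0 \<le> 1 / 4"
    using sum_power2_ge_zero[of "M0 - 1/2" 0] by (simp add: D_def power2_eq_square algebra_simps)
  define s where "s = sqrt (1 - 4 * V)"
  have s: "0 < s" "s < 1" "s\<^sup>2 = 1 - 4 * V"
    using assms \<open>D M0 \<le> 1 / 4\<close> by (auto simp: s_def)
  define M where "M = (1 + s) / 2"
  have DM: "D M = V"
    using s by (simp add: M_def D_def power2_eq_square field_simps)
  have "M > 1 / 2" using s by (simp add: M_def)
  have "M > M0"
  proof (rule ccontr)
    assume "\<not> M > M0"
    then have "(M - M0) * (M + M0 - 1) \<le> 0"
      using \<open>M > 1 / 2\<close> by (intro mult_nonpos_nonneg) auto
    moreover have "D M0 - D M = (M - M0) * (M + M0 - 1)"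
      by (simp add: D_def power2_eq_square algebra_simps)
    ultimately show False using DM assms by simp
  qed
  moreover have "M < 1" using s by (simp add: M_def)
  ultimately show ?thesis using DM by blast
qed

theorem corollary7:
  fixes m v M0 V0 :: real
  assumes "0 < m" "m < 1" "0 < v" "v < D m"
    and "m < M0" "M0 < 1" "0 < V0" "V0 < D M0"
    and "ssd (F m v) (F M0 V0)"
  shows "\<exists>M > M0. V0 \<le> D M \<and> \<not> ssd (F m v) (F M V0) \<and> \<not> ssd (F M V0) (F m v)"
proof -
  obtain M where M: "M > M0" "M < 1" "D M = V0"
    using exists_greater_root_of_D assms(7,8) by blast
  have "continuous_on {0..1} (F m v)" "F m v 0 = 0"
    using continuous_on_beta_cdf[OF beta_parameters_pos[OF assms(1-4)]] assms(4)
    by (simp_all add: F_eq_beta_cdf beta_cdf_def)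
  then obtain x where x: "0 < x" "x < 1" "integral {0..x} (F m v) < (1 - M) * x"
    using integral_below_linear_near_zero[of "F m v" "1 - M"] M(2) by auto
  have "\<not> ssd (F m v) (F M V0)"
  proof
    assume "ssd (F m v) (F M V0)"
    then have "integral {0..x} (F M V0) \<le> integral {0..x} (F m v)"
      using x unfolding ssd_def by auto
    then show False
      using x integral_F_max_variance[of V0 M x] M(3) by simp
  qed
  moreover have "\<not> ssd (F M V0) (F m v)"
  proof
    assume "ssd (F M V0) (F m v)"
    then have "integral {0..1} (F m v) \<le> integral {0..1} (F M V0)"
      unfolding ssd_def by auto
    then show False
      using integral_F_unit_interval[of m v] integral_F_unit_interval[of M V0] assms M by simp
  qed
  ultimately show ?thesis using M by auto
qed

end
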